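(* Let $G=(V,E)$ be a finite connected simple graph with vertex-weight $m_0\colon V\to\mathbb{R}_{>0}$ and distance parameter $d\colon E\to\mathbb{R}_{>0}$. Then $$\delta(G,m_0,d)=\max\{1-\nu(G,m_0,d),\,0\}.$$
   Context: Let $M=\sum_{u\in V}m_0(u)$ and $\|\cdot\|$ the Euclidean norm on $\mathbb{R}^{|V|}$. For $\varphi\colon V\to\mathbb{R}^{|V|}$, $\mathrm{bar}(\varphi)=\frac1M\sum_u m_0(u)\varphi(u)$. Define $\delta(G,m_0,d)=\inf\|\mathrm{bar}(\varphi)\|^2$ over all $\varphi\colon V\to\mathbb{R}^{|V|}$ with $\sum_u m_0(u)\|\varphi(u)\|^2=M$ and $\|\varphi(u)-\varphi(v)\|\le d(uv)$ for all $uv\in E$. Define $\nu(G,m_0,d)=\sup\frac1M\sum_{u}m_0(u)\|\varphi(u)\|^2$ over all $\varphi\colon V\to\mathbb{R}^{|V|}$ with $\sum_u m_0(u)\varphi(u)=0$ and $\|\varphi(u)-\varphi(v)\|\le d(uv)$ for all $uv\in E$. *)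

theory Defs
  imports "HOL-Analysis.Analysis"
begin

text \<open>Graphs: vertex set is the whole finite type 'v (so R^|V| is real^'v);
  edges are two-element vertex sets.\<close>

definition simple_graph :: "'v set set \<Rightarrow> bool" where
  "simple_graph E \<longleftrightarrow> (\<forall>e\<in>E. card e = 2)"

definition graph_connected :: "('v::finite) set set \<Rightarrow> bool" where
  "graph_connected E \<longleftrightarrow> (\<forall>u v. (\<lambda>x y. {x, y} \<in> E)\<^sup>*\<^sup>* u v)"

definition total_mass :: "('v::finite \<Rightarrow> real) \<Rightarrow> real" where
  "total_mass m0 = (\<Sum>u\<in>UNIV. m0 u)"

definition bar :: "('v::finite \<Rightarrow> real) \<Rightarrow> ('v \<Rightarrow> real ^ 'v) \<Rightarrow> real ^ 'v" where
  "bar m0 \<phi> = (1 / total_mass m0) *\<^sub>R (\<Sum>u\<in>UNIV. m0 u *\<^sub>R \<phi> u)"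

definition lipschitz_embedding ::
  "('v::finite) set set \<Rightarrow> ('v set \<Rightarrow> real) \<Rightarrow> ('v \<Rightarrow> real ^ 'v) \<Rightarrow> bool" where
  "lipschitz_embedding E d \<phi> \<longleftrightarrow>
     (\<forall>u v. {u, v} \<in> E \<longrightarrow> norm (\<phi> u - \<phi> v) \<le> d {u, v})"

definition delta :: "('v::finite) set set \<Rightarrow> ('v \<Rightarrow> real) \<Rightarrow> ('v set \<Rightarrow> real) \<Rightarrow> real" where
  "delta E m0 d = Inf {(norm (bar m0 \<phi>))\<^sup>2 | \<phi>.
      (\<Sum>u\<in>UNIV. m0 u * (norm (\<phi> u))\<^sup>2) = total_mass m0 \<and> lipschitz_embedding E d \<phi>}"

definition nu :: "('v::finite) set set \<Rightarrow> ('v \<Rightarrow> real) \<Rightarrow> ('v set \<Rightarrow> real) \<Rightarrow> real" where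
  "nu E m0 d = Sup {(1 / total_mass m0) * (\<Sum>u\<in>UNIV. m0 u * (norm (\<phi> u))\<^sup>2) | \<phi>.
      (\<Sum>u\<in>UNIV. m0 u *\<^sub>R \<phi> u) = 0 \<and> lipschitz_embedding E d \<phi>}"

end

theory Submission
  imports Defs
begin

text \<open>Split an admissible \<open>\<phi>\<close> as its barycenter \<open>b\<close> plus a centered part \<open>\<psi>\<close>. By the
  parallel axis theorem the normalisation \<open>\<Sum> m0 |\<phi>|\<^sup>2 = M\<close> becomes \<open>|b|\<^sup>2 = 1 - s\<close>, where
  \<open>s = (1/M) \<Sum> m0 |\<psi>|\<^sup>2\<close> is the energy of \<open>\<psi>\<close>; conversely every centered Lipschitz \<open>\<psi>\<close> of
  energy \<open>s \<le> 1\<close> can be shifted by a vector of length \<open>sqrt (1 - s)\<close>. So \<open>\<delta>\<close> is the infimum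
  of \<open>1 - s\<close> over the energies \<open>s \<le> 1\<close>. The set of energies contains \<open>0\<close>, is bounded because
  the graph is connected, and is closed downwards (scale \<open>\<psi>\<close> by a factor in \<open>[0, 1]\<close>); hence
  that infimum is \<open>1 - \<nu>\<close> if \<open>\<nu> \<le> 1\<close>, and \<open>0\<close> otherwise.\<close>

definition second_moment :: "('v::finite \<Rightarrow> real) \<Rightarrow> ('v \<Rightarrow> 'a::real_normed_vector) \<Rightarrow> real" where
  "second_moment m0 \<phi> = (\<Sum>u\<in>UNIV. m0 u * (norm (\<phi> u))\<^sup>2)"

definition centered :: "('v::finite \<Rightarrow> real) \<Rightarrow> ('v \<Rightarrow> 'a::real_vector) \<Rightarrow> bool" where
  "centered m0 \<psi> \<longleftrightarrow> (\<Sum>u\<in>UNIV. m0 u *\<^sub>R \<psi> u) = 0"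

definition centered_energies :: "('v::finite) set set \<Rightarrow> ('v \<Rightarrow> real) \<Rightarrow> ('v set \<Rightarrow> real) \<Rightarrow> real set" where
  "centered_energies E m0 d = {(1 / total_mass m0) * second_moment m0 \<psi> | \<psi>.
      centered m0 \<psi> \<and> lipschitz_embedding E d \<psi>}"

lemma total_mass_pos: "(\<And>u. m0 u > 0) \<Longrightarrow> total_mass m0 > 0"
  unfolding total_mass_def by (simp add: sum_pos)

lemma second_moment_scaleR: "second_moment m0 (\<lambda>u. k *\<^sub>R \<phi> u) = k\<^sup>2 * second_moment m0 \<phi>"
  by (simp add: second_moment_def power_mult_distrib sum_distrib_left algebra_simps)

lemma second_moment_const_le:
  assumes "\<And>u. m0 u \<ge> 0" and "\<And>u. norm (\<phi> u) \<le> D"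
  shows "second_moment m0 \<phi> \<le> total_mass m0 * D\<^sup>2"
proof -
  have "second_moment m0 \<phi> \<le> (\<Sum>u\<in>UNIV. m0 u * D\<^sup>2)"
    unfolding second_moment_def
    by (rule sum_mono) (simp add: assms mult_left_mono power_mono)
  thus ?thesis by (simp add: total_mass_def sum_distrib_right)
qed

lemma centered_scaleR:
  assumes "centered m0 \<psi>"
  shows "centered m0 (\<lambda>u. k *\<^sub>R \<psi> u)"
proof -
  have "(\<Sum>u\<in>UNIV. m0 u *\<^sub>R k *\<^sub>R \<psi> u) = k *\<^sub>R (\<Sum>u\<in>UNIV. m0 u *\<^sub>R \<psi> u)"
    by (simp add: scaleR_sum_right mult.commute)
  thus ?thesis using assms by (simp add: centered_def)
qed

lemma centered_diff_bar:
  assumes "total_mass m0 \<noteq> 0"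
  shows "centered m0 (\<lambda>u. \<phi> u - bar m0 \<phi>)"
  using assms
  by (simp add: centered_def bar_def total_mass_def scaleR_diff_right sum_subtractf
      scaleR_sum_left[symmetric] flip: sum_divide_distrib)

lemma bar_add_centered:
  assumes "total_mass m0 \<noteq> 0" and "centered m0 \<psi>"
  shows "bar m0 (\<lambda>u. b + \<psi> u) = b"
  using assms
  by (simp add: centered_def bar_def total_mass_def scaleR_add_right sum.distrib
      scaleR_sum_left[symmetric])

lemma second_moment_add_centered:
  fixes b :: "'a::real_inner" and \<psi> :: "'v::finite \<Rightarrow> 'a"
  assumes "centered m0 \<psi>"
  shows "second_moment m0 (\<lambda>u. b + \<psi> u) = total_mass m0 * (norm b)\<^sup>2 + second_moment m0 \<psi>"
proof -
  have "second_moment m0 (\<lambda>u. b + \<psi> u)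
      = (\<Sum>u\<in>UNIV. m0 u * (norm b)\<^sup>2 + 2 * (b \<bullet> (m0 u *\<^sub>R \<psi> u)) + m0 u * (norm (\<psi> u))\<^sup>2)"
    unfolding second_moment_def
    by (rule sum.cong) (auto simp: power2_norm_eq_inner inner_add algebra_simps inner_commute)
  also have "\<dots> = total_mass m0 * (norm b)\<^sup>2 + 2 * (b \<bullet> (\<Sum>u\<in>UNIV. m0 u *\<^sub>R \<psi> u))
      + second_moment m0 \<psi>"
    by (simp add: sum.distrib total_mass_def second_moment_def sum_distrib_left sum_distrib_right
        inner_sum_right)
  finally show ?thesis using assms by (simp add: centered_def)
qed

lemma norm_le_if_centered:
  fixes \<psi> :: "'v::finite \<Rightarrow> 'a::real_normed_vector"
  assumes m0: "\<And>u. m0 u > 0" and "centered m0 \<psi>"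
    and diam: "\<And>u v. norm (\<psi> u - \<psi> v) \<le> D"
  shows "norm (\<psi> u) \<le> D"
proof -
  have M: "total_mass m0 > 0" using m0 by (rule total_mass_pos)
  have "total_mass m0 *\<^sub>R \<psi> u = (\<Sum>v\<in>UNIV. m0 v *\<^sub>R (\<psi> u - \<psi> v))"
    using \<open>centered m0 \<psi>\<close>
    by (simp add: centered_def total_mass_def scaleR_sum_left sum_subtractf scaleR_diff_right)
  hence "total_mass m0 * norm (\<psi> u) = norm (\<Sum>v\<in>UNIV. m0 v *\<^sub>R (\<psi> u - \<psi> v))"
    using M by (metis abs_of_pos norm_scaleR)
  also have "\<dots> \<le> (\<Sum>v\<in>UNIV. m0 v * D)"
    by (rule order_trans[OF norm_sum sum_mono]) (simp add: diam m0 less_imp_le mult_left_mono)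
  also have "\<dots> = total_mass m0 * D" by (simp add: total_mass_def sum_distrib_right)
  finally show ?thesis using M by simp
qed

lemma lipschitz_embedding_const:
  "(\<And>e. e \<in> E \<Longrightarrow> d e \<ge> 0) \<Longrightarrow> lipschitz_embedding E d (\<lambda>_. c)"
  by (simp add: lipschitz_embedding_def)

lemma lipschitz_embedding_add_const [simp]:
  "lipschitz_embedding E d (\<lambda>u. b + \<phi> u) \<longleftrightarrow> lipschitz_embedding E d \<phi>"
  by (simp add: lipschitz_embedding_def)

lemma lipschitz_embedding_scaleR:
  assumes "lipschitz_embedding E d \<phi>" and "0 \<le> k" "k \<le> 1"
  shows "lipschitz_embedding E d (\<lambda>u. k *\<^sub>R \<phi> u)"
  unfolding lipschitz_embedding_def
proof (intro allI impI)
  fix u v assume e: "{u, v} \<in> E"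
  have "norm (\<phi> u - \<phi> v) \<le> d {u, v}" using assms(1) e by (simp add: lipschitz_embedding_def)
  moreover have "norm (k *\<^sub>R \<phi> u - k *\<^sub>R \<phi> v) = k * norm (\<phi> u - \<phi> v)"
    using \<open>0 \<le> k\<close> by (simp flip: scaleR_diff_right)
  ultimately show "norm (k *\<^sub>R \<phi> u - k *\<^sub>R \<phi> v) \<le> d {u, v}"
    using assms(2,3) by (metis mult_left_le_one_le norm_ge_zero order_trans)
qed

lemma lipschitz_embedding_walk_bound:
  assumes lip: "lipschitz_embedding E d \<phi>" and d: "\<And>e. e \<in> E \<Longrightarrow> d e \<ge> 0"
  shows "((\<lambda>x y. {x, y} \<in> E) ^^ n) u v \<Longrightarrow> norm (\<phi> u - \<phi> v) \<le> real n * (\<Sum>e\<in>E. d e)"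
proof (induction n arbitrary: v)
  case 0
  thus ?case by simp
next
  case (Suc n)
  then obtain w where walk: "((\<lambda>x y. {x, y} \<in> E) ^^ n) u w" and e: "{w, v} \<in> E" by auto
  have "norm (\<phi> u - \<phi> v) \<le> norm (\<phi> u - \<phi> w) + norm (\<phi> w - \<phi> v)"
    by (rule norm_diff_triangle_le[OF order_refl order_refl])
  also have "norm (\<phi> w - \<phi> v) \<le> d {w, v}"
    using lip e unfolding lipschitz_embedding_def by blast
  also have "d {w, v} \<le> (\<Sum>e\<in>E. d e)"
    using e d by (intro member_le_sum) auto
  finally show ?case using Suc.IH[OF walk] by (simp add: algebra_simps)
qed

lemma connected_lipschitz_embedding_diameter_bounded:
  fixes E :: "('v::finite) set set"
  assumes "graph_connected E" and d: "\<And>e. e \<in> E \<Longrightarrow> d e \<ge> 0"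
  obtains D where "\<And>\<phi> u v. lipschitz_embedding E d \<phi> \<Longrightarrow> norm (\<phi> u - \<phi> v) \<le> D"
proof -
  obtain N where walk: "\<And>u v. ((\<lambda>x y. {x, y} \<in> E) ^^ N u v) u v"
    using \<open>graph_connected E\<close> unfolding graph_connected_def rtranclp_power by metis
  define n where "n = Max (range (case_prod N))"
  have "N u v \<le> n" for u v
    unfolding n_def by (rule Max_ge) (auto intro: rev_image_eqI[of "(u, v)"])
  moreover have "(\<Sum>e\<in>E. d e) \<ge> 0" using d by (simp add: sum_nonneg)
  ultimately have "norm (\<phi> u - \<phi> v) \<le> real n * (\<Sum>e\<in>E. d e)"
    if "lipschitz_embedding E d \<phi>" for \<phi> u v
    using lipschitz_embedding_walk_bound[OF that d walk[of u v]]
    by (meson mult_right_mono of_nat_mono order_trans)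
  thus ?thesis using that by blast
qed

lemma Inf_one_minus_downward_closed:
  fixes S :: "real set"
  assumes "0 \<in> S" and bdd: "bdd_above S" and down: "\<And>s t. s \<in> S \<Longrightarrow> 0 \<le> t \<Longrightarrow> t \<le> s \<Longrightarrow> t \<in> S"
  shows "Inf {1 - s | s. s \<in> S \<and> s \<le> 1} = max (1 - Sup S) 0"
proof (cases "Sup S \<le> 1")
  case True
  hence "s \<le> 1" if "s \<in> S" for s using cSup_upper[OF that bdd] by linarith
  hence T: "{1 - s | s. s \<in> S \<and> s \<le> 1} = (\<lambda>s. 1 - s) ` S" by blast
  have "Inf ((\<lambda>s. 1 - s) ` S) = 1 - Sup S"
  proof (rule cInf_eq_non_empty)
    show "(\<lambda>s. 1 - s) ` S \<noteq> {}" using \<open>0 \<in> S\<close> by blast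
    show "1 - Sup S \<le> x" if "x \<in> (\<lambda>s. 1 - s) ` S" for x
      using that cSup_upper[OF _ bdd] by auto
    show "y \<le> 1 - Sup S" if "\<And>x. x \<in> (\<lambda>s. 1 - s) ` S \<Longrightarrow> y \<le> x" for y
      using that cSup_least[of S "1 - y"] \<open>0 \<in> S\<close> by fastforce
  qed
  thus ?thesis using T True by simp
next
  case False
  then obtain s where "s \<in> S" "1 < s" using less_cSup_iff[OF _ bdd, of 1] \<open>0 \<in> S\<close> by auto
  hence "1 \<in> S" using down by simp
  have "Inf {1 - s | s. s \<in> S \<and> s \<le> 1} = 0"
    by (rule cInf_eq_minimum) (use \<open>1 \<in> S\<close> in auto)
  thus ?thesis using False by simp
qed

lemma zero_in_centered_energies:
  "(\<And>e. e \<in> E \<Longrightarrow> d e \<ge> 0) \<Longrightarrow> 0 \<in> centered_energies E m0 d"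
  unfolding centered_energies_def
  by (rule CollectI, rule exI[of _ "\<lambda>_. 0"])
    (simp add: second_moment_def centered_def lipschitz_embedding_const)

lemma centered_energies_bdd_above:
  fixes E :: "('v::finite) set set"
  assumes "graph_connected E" and d: "\<And>e. e \<in> E \<Longrightarrow> d e \<ge> 0" and m0: "\<And>u. m0 u > 0"
  shows "bdd_above (centered_energies E m0 d)"
proof -
  obtain D where diam: "\<And>\<phi> u v. lipschitz_embedding E d \<phi> \<Longrightarrow> norm (\<phi> u - \<phi> v) \<le> D"
    using connected_lipschitz_embedding_diameter_bounded[of E d] assms(1) d by blast
  have "(1 / total_mass m0) * second_moment m0 \<psi> \<le> D\<^sup>2"
    if "centered m0 \<psi>" "lipschitz_embedding E d \<psi>" for \<psi>
  proof -
    have "\<And>u. norm (\<psi> u) \<le> D" using norm_le_if_centered[OF m0 that(1) diam[OF that(2)]] .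
    hence "second_moment m0 \<psi> \<le> total_mass m0 * D\<^sup>2"
      using m0 by (intro second_moment_const_le) (auto intro: less_imp_le)
    moreover have "total_mass m0 > 0" using m0 by (rule total_mass_pos)
    ultimately show ?thesis by (simp add: field_simps)
  qed
  thus ?thesis unfolding centered_energies_def by (intro bdd_aboveI[of _ "D\<^sup>2"]) blast
qed

lemma centered_energies_downward_closed:
  assumes "s \<in> centered_energies E m0 d" and "0 \<le> t" "t \<le> s"
  shows "t \<in> centered_energies E m0 d"
proof -
  obtain \<psi> where s: "s = (1 / total_mass m0) * second_moment m0 \<psi>"
    and "centered m0 \<psi>" "lipschitz_embedding E d \<psi>"
    using assms(1) unfolding centered_energies_def by blast
  define k where "k = sqrt (t / s)"
    \<comment> \<open>also right for \<open>s = 0\<close>: then \<open>t = 0\<close>, and \<open>k = 0\<close> as \<open>t / 0 = 0\<close>\<close>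
  have "0 \<le> k" "k \<le> 1" using assms(2,3) by (auto simp: k_def divide_le_eq_1)
  have "k\<^sup>2 * s = t" using assms(2,3) by (auto simp: k_def)
  hence "t = (1 / total_mass m0) * second_moment m0 (\<lambda>u. k *\<^sub>R \<psi> u)"
    by (simp add: s second_moment_scaleR)
  moreover have "centered m0 (\<lambda>u. k *\<^sub>R \<psi> u)"
    using \<open>centered m0 \<psi>\<close> by (rule centered_scaleR)
  moreover have "lipschitz_embedding E d (\<lambda>u. k *\<^sub>R \<psi> u)"
    using \<open>lipschitz_embedding E d \<psi>\<close> \<open>0 \<le> k\<close> \<open>k \<le> 1\<close> by (rule lipschitz_embedding_scaleR)
  ultimately show ?thesis unfolding centered_energies_def by blast
qed

lemma normalized_barycenters_eq:
  fixes E :: "('v::finite) set set"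
  assumes M: "total_mass m0 \<noteq> 0"
  shows "{(norm (bar m0 \<phi>))\<^sup>2 | \<phi>. second_moment m0 \<phi> = total_mass m0 \<and> lipschitz_embedding E d \<phi>}
    = {1 - s | s. s \<in> centered_energies E m0 d \<and> s \<le> 1}"
    (is "?T = ?S")
proof (intro equalityI subsetI)
  fix x assume "x \<in> ?T"
  then obtain \<phi> where x: "x = (norm (bar m0 \<phi>))\<^sup>2"
    and norm: "second_moment m0 \<phi> = total_mass m0" and lip: "lipschitz_embedding E d \<phi>"
    by blast
  define b where "b = bar m0 \<phi>"
  define \<psi> where "\<psi> = (\<lambda>u. \<phi> u - b)"
  have "centered m0 \<psi>" unfolding \<psi>_def b_def using M by (rule centered_diff_bar)
  moreover have "\<phi> = (\<lambda>u. b + \<psi> u)" by (simp add: \<psi>_def)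
  ultimately have "total_mass m0 = total_mass m0 * (norm b)\<^sup>2 + second_moment m0 \<psi>"
    using norm second_moment_add_centered[of m0 \<psi> b] by simp
  hence "x = 1 - (1 / total_mass m0) * second_moment m0 \<psi>"
    using M by (simp add: x b_def field_simps)
  moreover have "lipschitz_embedding E d \<psi>"
    using lip by (simp add: \<psi>_def lipschitz_embedding_def)
  with \<open>centered m0 \<psi>\<close>
  have "(1 / total_mass m0) * second_moment m0 \<psi> \<in> centered_energies E m0 d"
    unfolding centered_energies_def by blast
  moreover have "x \<ge> 0" by (simp add: x)
  ultimately show "x \<in> ?S" by force
next
  fix x assume "x \<in> ?S"
  then obtain \<psi> where x: "x = 1 - (1 / total_mass m0) * second_moment m0 \<psi>"
    and le1: "(1 / total_mass m0) * second_moment m0 \<psi> \<le> 1"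
    and "centered m0 \<psi>" and lip: "lipschitz_embedding E d \<psi>"
    unfolding centered_energies_def by blast
  obtain i :: 'v where True by blast
  define b :: "real^'v" where "b = sqrt x *\<^sub>R axis i 1"
  have nb: "(norm b)\<^sup>2 = x" using le1 by (simp add: b_def x)
  have "bar m0 (\<lambda>u. b + \<psi> u) = b"
    using M \<open>centered m0 \<psi>\<close> by (rule bar_add_centered)
  moreover have "second_moment m0 (\<lambda>u. b + \<psi> u) = total_mass m0"
    using second_moment_add_centered[OF \<open>centered m0 \<psi>\<close>, of b] M by (simp add: nb x field_simps)
  moreover have "lipschitz_embedding E d (\<lambda>u. b + \<psi> u)" using lip by simp
  ultimately show "x \<in> ?T" using nb by force
qed

theorem proposition2p4:
  fixes E :: "('v::finite) set set" and m0 :: "'v \<Rightarrow> real" and d :: "'v set \<Rightarrow> real"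
  assumes "simple_graph E" and "graph_connected E"
    and "\<And>u. m0 u > 0" and "\<And>e. e \<in> E \<Longrightarrow> d e > 0"
  shows "delta E m0 d = max (1 - nu E m0 d) 0"
proof -
  have d: "\<And>e. e \<in> E \<Longrightarrow> d e \<ge> 0" using assms(4) by (simp add: less_imp_le)
  have "total_mass m0 > 0" using assms(3) by (rule total_mass_pos)
  hence M: "total_mass m0 \<noteq> 0" by simp
  have "delta E m0 d = Inf {(norm (bar m0 \<phi>))\<^sup>2 | \<phi>.
      second_moment m0 \<phi> = total_mass m0 \<and> lipschitz_embedding E d \<phi>}"
    unfolding delta_def second_moment_def ..
  also have "\<dots> = Inf {1 - s | s. s \<in> centered_energies E m0 d \<and> s \<le> 1}"
    by (simp only: normalized_barycenters_eq[OF M])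
  also have "\<dots> = max (1 - Sup (centered_energies E m0 d)) 0"
    using zero_in_centered_energies[of E d m0] centered_energies_bdd_above[OF assms(2) d assms(3)]
      centered_energies_downward_closed d
    by (intro Inf_one_minus_downward_closed) auto
  also have "Sup (centered_energies E m0 d) = nu E m0 d"
    by (simp add: nu_def centered_energies_def second_moment_def centered_def)
  finally show ?thesis .
qed

end
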